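(* Let $F\in\mathrm{GL}^+(2)$ have singular values $\lambda_1=\lambda_2=c$, and let $H\in\mathbb{R}^{2\times2}$. Define $\lambda_{\max}(t)=\lambda_{\max}(F+tH)$ and $\lambda_{\min}(t)=\lambda_{\min}(F+tH)$, the larger and smaller singular values of $F+tH$. Then the mappings $t\mapsto\lambda_{\max}(t)$ and $t\mapsto\lambda_{\min}(t)$ are both left-differentiable and right-differentiable in a neighbourhood of $t=0$, and $$\partial^-\lambda_{\max}(0)=\partial^+\lambda_{\min}(0)\leq\partial^-\lambda_{\min}(0)=\partial^+\lambda_{\max}(0).$$
   Context: $\mathrm{GL}^+(2)$ is the group of real invertible $2\times2$ matrices with positive determinant. For a real function $f$, the one-sided derivatives are $\partial^-f(t)=\lim_{h\uparrow0}\frac{f(t+h)-f(t)}{h}$ and $\partial^+f(t)=\lim_{h\downarrow0}\frac{f(t+h)-f(t)}{h}$. *)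

theory Defs
  imports "HOL-Analysis.Analysis"
begin

definition singular_values :: "real^2^2 \<Rightarrow> real set" where
  "singular_values A =
     {sqrt \<mu> | \<mu>. \<exists>v::real^2. v \<noteq> 0 \<and> (transpose A ** A) *v v = \<mu> *\<^sub>R v}"

definition sv_max :: "real^2^2 \<Rightarrow> real" where
  "sv_max A = Max (singular_values A)"

definition sv_min :: "real^2^2 \<Rightarrow> real" where
  "sv_min A = Min (singular_values A)"

end

(* Identify R^2 with C.  A real 2x2 matrix then acts as z \<mapsto> \<alpha> z + \<beta> conj z, and its singular
   values are |\<alpha>| + |\<beta>| and ||\<alpha>| - |\<beta>||, while det = |\<alpha>|^2 - |\<beta>|^2.  Equal singular values
   and positive determinant force \<beta>(F) = 0, so along F + t H the singular values are
   |\<alpha>(F) + t \<alpha>(H)| \<plusminus> |t| |\<beta>(H)| as long as the determinant stays positive: a smooth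
   function plus or minus a multiple of the kink |t|, whose one-sided slopes at 0 are -1 and 1. *)

theory Submission
  imports Defs
begin

lemma has_eigenvector_iff_det_eq_0:
  fixes M :: "real^'n^'n"
  shows "(\<exists>v. v \<noteq> 0 \<and> M *v v = \<mu> *\<^sub>R v) \<longleftrightarrow> det (M - \<mu> *\<^sub>R mat 1) = 0"
proof -
  have "M *v v = \<mu> *\<^sub>R v \<longleftrightarrow> (M - \<mu> *\<^sub>R mat 1) *v v = 0" for v
    by (simp add: matrix_vector_mult_diff_rdistrib flip: scaleR_matrix_vector_assoc)
  then show ?thesis
    using matrix_nonfull_linear_equations_eq[of "M - \<mu> *\<^sub>R mat 1"]
      det_eq_0_rank[of "M - \<mu> *\<^sub>R mat 1"] rank_bound[of "M - \<mu> *\<^sub>R mat 1"]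
    by auto
qed

text \<open>The matrix \<open>A\<close> acts on \<open>x + i y\<close> as \<open>z \<mapsto> conformal_part A * z + anticonformal_part A * cnj z\<close>.\<close>

definition conformal_part :: "real^2^2 \<Rightarrow> complex" where
  "conformal_part A = Complex ((A$1$1 + A$2$2) / 2) ((A$2$1 - A$1$2) / 2)"

definition anticonformal_part :: "real^2^2 \<Rightarrow> complex" where
  "anticonformal_part A = Complex ((A$1$1 - A$2$2) / 2) ((A$1$2 + A$2$1) / 2)"

lemma conformal_part_add_scaleR:
  "conformal_part (A + s *\<^sub>R B) = conformal_part A + s *\<^sub>R conformal_part B"
  by (simp add: conformal_part_def complex_eq_iff field_simps)

lemma anticonformal_part_add_scaleR:
  "anticonformal_part (A + s *\<^sub>R B) = anticonformal_part A + s *\<^sub>R anticonformal_part B"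
  by (simp add: anticonformal_part_def complex_eq_iff field_simps)

lemma cmod_conformal_part_sq:
  "(cmod (conformal_part A))\<^sup>2 = ((A$1$1 + A$2$2) / 2)\<^sup>2 + ((A$2$1 - A$1$2) / 2)\<^sup>2"
  by (simp add: conformal_part_def cmod_power2)

lemma cmod_anticonformal_part_sq:
  "(cmod (anticonformal_part A))\<^sup>2 = ((A$1$1 - A$2$2) / 2)\<^sup>2 + ((A$1$2 + A$2$1) / 2)\<^sup>2"
  by (simp add: anticonformal_part_def cmod_power2)

lemma det_eq_conformal_anticonformal:
  "det A = (cmod (conformal_part A))\<^sup>2 - (cmod (anticonformal_part A))\<^sup>2"
  unfolding cmod_conformal_part_sq cmod_anticonformal_part_sq det_2
  by (simp add: field_simps power2_eq_square)

lemma singular_values_eq: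
  "singular_values A =
     {cmod (conformal_part A) + cmod (anticonformal_part A),
      \<bar>cmod (conformal_part A) - cmod (anticonformal_part A)\<bar>}"
proof -
  define u where "u = cmod (conformal_part A)"
  define w where "w = cmod (anticonformal_part A)"
  let ?M = "transpose A ** A"
  have M: "?M$1$1 = (A$1$1)\<^sup>2 + (A$2$1)\<^sup>2" "?M$2$2 = (A$1$2)\<^sup>2 + (A$2$2)\<^sup>2"
     "?M$1$2 = A$1$1 * A$1$2 + A$2$1 * A$2$2" "?M$2$1 = A$1$1 * A$1$2 + A$2$1 * A$2$2"
    by (simp_all add: matrix_matrix_mult_def transpose_def sum_2 power2_eq_square)
  have trace: "?M$1$1 + ?M$2$2 = 2 * (u\<^sup>2 + w\<^sup>2)"
    unfolding M u_def w_def cmod_conformal_part_sq cmod_anticonformal_part_sq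
    by (simp add: field_simps power2_eq_square)
  have "det ?M = (u\<^sup>2 - w\<^sup>2)\<^sup>2"
    unfolding det_mul det_transpose u_def w_def det_eq_conformal_anticonformal[symmetric]
    by (simp add: power2_eq_square)
  then have det: "?M$1$1 * ?M$2$2 - ?M$1$2 * ?M$2$1 = (u\<^sup>2 - w\<^sup>2)\<^sup>2"
    unfolding det_2 .
  have charpoly: "det (?M - \<mu> *\<^sub>R mat 1) = (\<mu> - (u + w)\<^sup>2) * (\<mu> - (u - w)\<^sup>2)" for \<mu>
  proof -
    have "det (?M - \<mu> *\<^sub>R mat 1) = \<mu>\<^sup>2 - (?M$1$1 + ?M$2$2) * \<mu> + (?M$1$1 * ?M$2$2 - ?M$1$2 * ?M$2$1)"
      by (simp add: det_2 mat_def algebra_simps power2_eq_square)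
    also have "\<dots> = (\<mu> - (u + w)\<^sup>2) * (\<mu> - (u - w)\<^sup>2)"
      unfolding trace det by (simp add: algebra_simps power2_eq_square)
    finally show ?thesis .
  qed
  have "u \<ge> 0" "w \<ge> 0"
    by (simp_all add: u_def w_def)
  have "singular_values A = sqrt ` {(u + w)\<^sup>2, (u - w)\<^sup>2}"
    unfolding singular_values_def has_eigenvector_iff_det_eq_0 charpoly mult_eq_0_iff right_minus_eq by blast
  also have "\<dots> = {u + w, \<bar>u - w\<bar>}"
    using \<open>u \<ge> 0\<close> \<open>w \<ge> 0\<close> by simp
  finally show ?thesis
    by (simp add: u_def w_def)
qed

lemma sv_max_eq: "sv_max A = cmod (conformal_part A) + cmod (anticonformal_part A)"
  unfolding sv_max_def singular_values_eq
  using norm_ge_zero[of "conformal_part A"] norm_ge_zero[of "anticonformal_part A"]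
  by (simp add: max_def abs_if)

lemma sv_min_eq: "sv_min A = \<bar>cmod (conformal_part A) - cmod (anticonformal_part A)\<bar>"
  unfolding sv_min_def singular_values_eq
  using norm_ge_zero[of "conformal_part A"] norm_ge_zero[of "anticonformal_part A"]
  by (simp add: min_def abs_if)

lemma cmod_anticonformal_part_less_if_det_pos:
  assumes "det A > 0"
  shows "cmod (anticonformal_part A) < cmod (conformal_part A)"
  using assms unfolding det_eq_conformal_anticonformal
  by (simp add: power2_less_imp_less)

lemma anticonformal_part_eq_0_if_equal_sv:
  assumes "det A > 0" and "sv_max A = sv_min A"
  shows "anticonformal_part A = 0"
  using assms cmod_anticonformal_part_less_if_det_pos[OF assms(1)]
  by (simp add: sv_max_eq sv_min_eq)

lemma sv_min_eq_if_det_pos: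
  assumes "det A > 0"
  shows "sv_min A = cmod (conformal_part A) - cmod (anticonformal_part A)"
  using cmod_anticonformal_part_less_if_det_pos[OF assms] by (simp add: sv_min_eq)

lemma eventually_det_pos_along_line:
  fixes F H :: "real^2^2"
  assumes "det (F + t *\<^sub>R H) > 0"
  shows "eventually (\<lambda>s. det (F + s *\<^sub>R H) > 0) (nhds t)"
proof -
  have "isCont (\<lambda>s. det (F + s *\<^sub>R H)) t"
    unfolding det_2 by (simp add: continuous_intros)
  then have "((\<lambda>s. det (F + s *\<^sub>R H)) \<longlongrightarrow> det (F + t *\<^sub>R H)) (nhds t)"
    using tendsto_at_iff_tendsto_nhds[of "\<lambda>s. det (F + s *\<^sub>R H)" t] by (simp add: isCont_def)
  from order_tendstoD(1)[OF this assms] show ?thesis .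
qed

lemma abs_has_real_derivative_at_left:
  "((\<lambda>s::real. \<bar>s\<bar>) has_real_derivative (if 0 < t then 1 else -1)) (at_left t)"
proof (cases "0 < t")
  case True
  have "eventually (\<lambda>s. s = \<bar>s\<bar>) (at_left t)"
    using eventually_at_left_real[OF True] by (auto elim!: eventually_mono)
  then show ?thesis
    using True has_field_derivative_cong_eventually[of "\<lambda>s. s" abs t "{..<t}" 1] by simp
next
  case False
  have "eventually (\<lambda>s. - s = \<bar>s\<bar>) (at_left t)"
    using False unfolding eventually_at_filter by (auto intro!: always_eventually)
  moreover have "((\<lambda>s. - s) has_real_derivative -1) (at_left t)"
    by (auto intro!: derivative_eq_intros)
  ultimately show ?thesis
    using False has_field_derivative_cong_eventually[of "\<lambda>s. - s" abs t "{..<t}" "-1"] by simp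
qed

lemma abs_has_real_derivative_at_right:
  "((\<lambda>s::real. \<bar>s\<bar>) has_real_derivative (if t < 0 then -1 else 1)) (at_right t)"
proof (cases "t < 0")
  case True
  have "eventually (\<lambda>s. - s = \<bar>s\<bar>) (at_right t)"
    using eventually_at_right_real[OF True] by (auto elim!: eventually_mono)
  moreover have "((\<lambda>s. - s) has_real_derivative -1) (at_right t)"
    by (auto intro!: derivative_eq_intros)
  ultimately show ?thesis
    using True has_field_derivative_cong_eventually[of "\<lambda>s. - s" abs t "{t<..}" "-1"] by simp
next
  case False
  have "eventually (\<lambda>s. s = \<bar>s\<bar>) (at_right t)"
    using False unfolding eventually_at_filter by (auto intro!: always_eventually)
  then show ?thesis
    using False has_field_derivative_cong_eventually[of "\<lambda>s. s" abs t "{t<..}" 1] by simp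
qed

lemma sv_along_line_has_derivative:
  fixes F H :: "real^2^2"
  assumes conformal: "anticonformal_part F = 0"
    and det_pos: "det (F + t *\<^sub>R H) > 0"
    and abs_deriv: "((\<lambda>s. \<bar>s\<bar>) has_real_derivative d) (at t within S)"
  shows "((\<lambda>s. sv_max (F + s *\<^sub>R H)) has_real_derivative
           conformal_part H \<bullet> sgn (conformal_part (F + t *\<^sub>R H))
             + cmod (anticonformal_part H) * d) (at t within S)"
    and "((\<lambda>s. sv_min (F + s *\<^sub>R H)) has_real_derivative
           conformal_part H \<bullet> sgn (conformal_part (F + t *\<^sub>R H))
             - cmod (anticonformal_part H) * d) (at t within S)"
proof -
  define z where "z s = conformal_part F + s *\<^sub>R conformal_part H" for s
  define r where "r = cmod (anticonformal_part H)"
  have anticonformal: "cmod (anticonformal_part (F + s *\<^sub>R H)) = r * \<bar>s\<bar>" for s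
    by (simp add: anticonformal_part_add_scaleR conformal r_def)
  have conformal_z: "conformal_part (F + s *\<^sub>R H) = z s" for s
    by (simp add: conformal_part_add_scaleR z_def)
  have "z t \<noteq> 0"
    using cmod_anticonformal_part_less_if_det_pos[OF det_pos] by (auto simp: conformal_z)
  have "(z has_derivative (\<lambda>h. h *\<^sub>R conformal_part H)) (at t within S)"
    unfolding z_def by (auto intro!: derivative_eq_intros)
  from has_derivative_compose[OF this has_derivative_norm[OF \<open>z t \<noteq> 0\<close>]]
  have "((\<lambda>s. cmod (z s)) has_derivative (\<lambda>h. (h *\<^sub>R conformal_part H) \<bullet> sgn (z t))) (at t within S)" .
  then have cmod_z: "((\<lambda>s. cmod (z s)) has_real_derivative conformal_part H \<bullet> sgn (z t)) (at t within S)"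
    by (simp add: has_field_derivative_def mult_commute_abs)
  have "sv_max (F + s *\<^sub>R H) = cmod (z s) + r * \<bar>s\<bar>" for s
    by (simp add: sv_max_eq anticonformal conformal_z)
  then show "((\<lambda>s. sv_max (F + s *\<^sub>R H)) has_real_derivative
           conformal_part H \<bullet> sgn (conformal_part (F + t *\<^sub>R H))
             + cmod (anticonformal_part H) * d) (at t within S)"
    unfolding conformal_z r_def[symmetric] by (auto intro!: DERIV_add DERIV_cmult cmod_z abs_deriv)
  have sv_min_near: "sv_min (F + s *\<^sub>R H) = cmod (z s) - r * \<bar>s\<bar>"
    if "det (F + s *\<^sub>R H) > 0" for s
    using sv_min_eq_if_det_pos[OF that] by (simp add: anticonformal conformal_z)
  have ev: "eventually (\<lambda>s. cmod (z s) - r * \<bar>s\<bar> = sv_min (F + s *\<^sub>R H)) (at t within S)"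
    using eventually_det_pos_along_line[OF det_pos]
    unfolding eventually_at_filter by (auto elim!: eventually_mono simp: sv_min_near)
  have deriv: "((\<lambda>s. cmod (z s) - r * \<bar>s\<bar>) has_real_derivative
                   conformal_part H \<bullet> sgn (z t) - r * d) (at t within S)"
    by (intro DERIV_diff DERIV_cmult cmod_z abs_deriv)
  show "((\<lambda>s. sv_min (F + s *\<^sub>R H)) has_real_derivative
           conformal_part H \<bullet> sgn (conformal_part (F + t *\<^sub>R H))
             - cmod (anticonformal_part H) * d) (at t within S)"
    using deriv has_field_derivative_cong_eventually[OF ev] sv_min_near[OF det_pos]
    unfolding conformal_z r_def[symmetric] by simp
qed

theorem lemma3p8:
  fixes F H :: "real^2^2" and c :: real
  assumes "det F > 0"
    and "sv_max F = c" and "sv_min F = c"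
  shows "(\<exists>\<epsilon>>0. \<forall>t. \<bar>t\<bar> < \<epsilon> \<longrightarrow>
            (\<exists>D. ((\<lambda>s. sv_max (F + s *\<^sub>R H)) has_real_derivative D) (at_left t)) \<and>
            (\<exists>D. ((\<lambda>s. sv_max (F + s *\<^sub>R H)) has_real_derivative D) (at_right t)) \<and>
            (\<exists>D. ((\<lambda>s. sv_min (F + s *\<^sub>R H)) has_real_derivative D) (at_left t)) \<and>
            (\<exists>D. ((\<lambda>s. sv_min (F + s *\<^sub>R H)) has_real_derivative D) (at_right t)))
      \<and> (\<exists>a b. ((\<lambda>s. sv_max (F + s *\<^sub>R H)) has_real_derivative a) (at_left 0) \<and>
               ((\<lambda>s. sv_min (F + s *\<^sub>R H)) has_real_derivative a) (at_right 0) \<and>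
               ((\<lambda>s. sv_min (F + s *\<^sub>R H)) has_real_derivative b) (at_left 0) \<and>
               ((\<lambda>s. sv_max (F + s *\<^sub>R H)) has_real_derivative b) (at_right 0) \<and>
               a \<le> b)"
proof -
  let ?D = "conformal_part H \<bullet> sgn (conformal_part F)"
  let ?r = "cmod (anticonformal_part H)"
  have conformal: "anticonformal_part F = 0"
    using assms by (intro anticonformal_part_eq_0_if_equal_sv) simp_all
  obtain \<epsilon> where "\<epsilon> > 0" and det_pos: "\<And>t. \<bar>t\<bar> < \<epsilon> \<Longrightarrow> det (F + t *\<^sub>R H) > 0"
    using eventually_det_pos_along_line[of F 0 H] assms(1)
    by (auto simp: eventually_nhds_metric dist_real_def)
  note derivs = sv_along_line_has_derivative[OF conformal det_pos]
  have "\<bar>0::real\<bar> < \<epsilon>"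
    using \<open>\<epsilon> > 0\<close> by simp
  note at_0 = derivs[OF this abs_has_real_derivative_at_left]
    derivs[OF this abs_has_real_derivative_at_right]
  show ?thesis (is "?near_0 \<and> ?at_0")
  proof
    show ?near_0
      using \<open>\<epsilon> > 0\<close> derivs[OF _ abs_has_real_derivative_at_left]
        derivs[OF _ abs_has_real_derivative_at_right] by blast
    show ?at_0
      using at_0 by (intro exI[of _ "?D - ?r"] exI[of _ "?D + ?r"]) simp
  qed
qed

end
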